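(* Let $X$ be a metric space, $1\le p<\infty$, $c>0$, and assume $0<\epsilon_{X;p}(S)<\infty$ for all $S\ge c$. Let $f\colon[c,\infty)\to[0,\infty)$ be non-decreasing with $$\int_c^\infty\epsilon_{X;p}(S)^p\,d\big(f(S)^p\big)<\infty .$$ Then there exist a Borel measure $\mu$ on $[c,\infty)$, a Lipschitz map $\theta\colon X\to L^p([c,\infty),\mu;\ell^p(X))$ and a non-decreasing function $\rho$ with $\rho\succeq f$ such that $\|\theta(x)-\theta(y)\|_p\ge\rho(d(x,y))$ for all $x,y\in X$.
   Context: For a metric space $(X,d)$ and $1\le p<\infty$, $\ell^p(X)$ is the space of $p$-summable real functions on $X$ and $\ell^p_1(X)$ its unit sphere. For a map $\xi\colon X\to\ell^p(X)$, written $x\mapsto\xi_x$, put $S(\xi)=\sup\{d(x,y):\xi_x(y)\neq0\}$ and $\varepsilon(\xi;p)=\sup_{x\ne y}\|\xi_x-\xi_y\|_p/d(x,y)$. The profile is $\epsilon_{X;p}(S)=\inf\{\varepsilon(\xi;p):\xi\colon X\to\ell^p_1(X),\ S(\xi)\le S\}$. For non-negative monotone functions $f,g$, $f\succeq g$ means there are constants $C,D>0$ with $f(t)\ge Cg(Dt)$ for all sufficiently large $t$. The integral is a Lebesgue–Stieltjes integral with respect to $f^p$. *)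

theory Defs
  imports "HOL-Analysis.Analysis"
begin

definition lp_member :: "real \<Rightarrow> ('a \<Rightarrow> real) \<Rightarrow> bool" where
  "lp_member p f \<longleftrightarrow> (\<lambda>y. \<bar>f y\<bar> powr p) summable_on UNIV"

definition lp_norm :: "real \<Rightarrow> ('a \<Rightarrow> real) \<Rightarrow> real" where
  "lp_norm p f = (infsum (\<lambda>y. \<bar>f y\<bar> powr p) UNIV) powr (1 / p)"

definition prop_size :: "('a::metric_space \<Rightarrow> 'a \<Rightarrow> real) \<Rightarrow> ereal" where
  "prop_size \<xi> = (SUP xy \<in> {(x, y). \<xi> x y \<noteq> 0}. ereal (dist (fst xy) (snd xy)))"

definition eps_map :: "real \<Rightarrow> ('a::metric_space \<Rightarrow> 'a \<Rightarrow> real) \<Rightarrow> ereal" where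
  "eps_map p \<xi> = (SUP xy \<in> {(x, y). x \<noteq> y}.
      ereal (lp_norm p (\<xi> (fst xy) - \<xi> (snd xy)) / dist (fst xy) (snd xy)))"

definition profile :: "'a::metric_space itself \<Rightarrow> real \<Rightarrow> real \<Rightarrow> ereal" where
  "profile _ p S = (INF \<xi> \<in> {\<xi> :: 'a \<Rightarrow> 'a \<Rightarrow> real.
        (\<forall>x. lp_member p (\<xi> x) \<and> lp_norm p (\<xi> x) = 1) \<and> prop_size \<xi> \<le> ereal S}.
      eps_map p \<xi>)"

definition succeq_fun :: "(real \<Rightarrow> real) \<Rightarrow> (real \<Rightarrow> real) \<Rightarrow> bool" where
  "succeq_fun f g \<longleftrightarrow> (\<exists>C>0. \<exists>D>0. eventually (\<lambda>t. f t \<ge> C * g (D * t)) at_top)"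

text \<open>Right-continuous normalisation of the non-decreasing function S \<mapsto> f(S)^p on [c,\<infinity>),
  extended by the constant f(c)^p to the left of c (so the measure lives on [c,\<infinity>),
  with an atom f(c+)^p - f(c)^p at c).\<close>
definition LS_fun :: "(real \<Rightarrow> real) \<Rightarrow> real \<Rightarrow> real \<Rightarrow> real \<Rightarrow> real" where
  "LS_fun f p c t = (INF s \<in> {s. t < s \<and> c \<le> s}. f s powr p)"

definition lp_simple :: "real measure \<Rightarrow> real \<Rightarrow> (real \<Rightarrow> 'a \<Rightarrow> real) \<Rightarrow> bool" where
  "lp_simple \<mu> p s \<longleftrightarrow> finite (s ` space \<mu>) \<and>
     (\<forall>v \<in> s ` space \<mu>. s -` {v} \<inter> space \<mu> \<in> sets \<mu>) \<and>
     (\<forall>t \<in> space \<mu>. lp_member p (s t))"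

definition lp_strongly_measurable :: "real measure \<Rightarrow> real \<Rightarrow> (real \<Rightarrow> 'a \<Rightarrow> real) \<Rightarrow> bool" where
  "lp_strongly_measurable \<mu> p g \<longleftrightarrow> (\<forall>t \<in> space \<mu>. lp_member p (g t)) \<and>
     (\<exists>s :: nat \<Rightarrow> real \<Rightarrow> 'a \<Rightarrow> real. (\<forall>n. lp_simple \<mu> p (s n)) \<and>
        (AE t in \<mu>. (\<lambda>n. lp_norm p (s n t - g t)) \<longlonglongrightarrow> 0))"

definition Lp_lp :: "real measure \<Rightarrow> real \<Rightarrow> (real \<Rightarrow> 'a \<Rightarrow> real) \<Rightarrow> bool" where
  "Lp_lp \<mu> p g \<longleftrightarrow> lp_strongly_measurable \<mu> p g \<and>
     (\<integral>\<^sup>+ t. ennreal (lp_norm p (g t) powr p) \<partial>\<mu>) < \<infinity>"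

definition Lp_lp_norm :: "real measure \<Rightarrow> real \<Rightarrow> (real \<Rightarrow> 'a \<Rightarrow> real) \<Rightarrow> real" where
  "Lp_lp_norm \<mu> p g = (enn2real (\<integral>\<^sup>+ t. ennreal (lp_norm p (g t) powr p) \<partial>\<mu>)) powr (1 / p)"

end

theory Submission
  imports Defs
begin

text \<open>
  Discretise the scale at S_k = c(k+1). At each S_k choose a unit map \<xi>_k of propagation at most
  S_k whose Lipschitz constant is at most 2 \<epsilon>(S_k), and let \<mu> put the mass
  w_k = F(S_k) - F(S_(k-1)) at S_k, where F is the right-continuous version of f^p and F(S_(-1)) = 0.
  For \<theta>(x) = (\<xi>_k(x) - \<xi>_k(x0))_k one has
  \<parallel>\<theta>(x) - \<theta>(y)\<parallel>^p = \<Sum>_k w_k \<parallel>\<xi>_k(x) - \<xi>_k(y)\<parallel>^p.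
  This is at most 2^p (\<Sum>_k w_k \<epsilon>(S_k)^p) d(x,y)^p, a convergent series: \<epsilon> is non-increasing,
  so the series is dominated by the Lebesgue-Stieltjes integral of the hypothesis. It is at least
  \<Sum>_(2 S_k < d(x,y)) w_k, since \<xi>_k(x) and \<xi>_k(y) have disjoint supports once d(x,y) > 2 S_k;
  this sum telescopes to F(S_k) \<ge> f(S_k)^p for the largest such k, and that S_k is at least d(x,y)/4.
\<close>

lemma lp_member_zero [simp]: "lp_member p (\<lambda>_. 0 :: real)"
  by (simp add: lp_member_def)

lemma lp_norm_zero [simp]: "lp_norm p (\<lambda>_. 0 :: real) = 0"
  by (simp add: lp_norm_def)

lemma lp_norm_nonneg: "0 \<le> lp_norm p g"
  by (simp add: lp_norm_def)

lemma abs_diff_powr_le: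
  fixes a b p :: real
  assumes "0 < p"
  shows "\<bar>a - b\<bar> powr p \<le> 2 powr p * (\<bar>a\<bar> powr p + \<bar>b\<bar> powr p)"
proof -
  have "\<bar>a - b\<bar> \<le> 2 * max \<bar>a\<bar> \<bar>b\<bar>" by auto
  then have "\<bar>a - b\<bar> powr p \<le> (2 * max \<bar>a\<bar> \<bar>b\<bar>) powr p"
    using assms by (intro powr_mono2) auto
  also have "\<dots> = 2 powr p * max \<bar>a\<bar> \<bar>b\<bar> powr p"
    by (simp add: powr_mult)
  also have "max \<bar>a\<bar> \<bar>b\<bar> powr p \<le> \<bar>a\<bar> powr p + \<bar>b\<bar> powr p"
    by (cases "\<bar>a\<bar> \<le> \<bar>b\<bar>") (auto simp: max_def)
  finally show ?thesis by (simp add: mult_left_mono)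
qed

lemma lp_member_diff:
  assumes "0 < p" "lp_member p a" "lp_member p b"
  shows "lp_member p (a - b)"
proof -
  have "(\<lambda>y. 2 powr p * (\<bar>a y\<bar> powr p + \<bar>b y\<bar> powr p)) summable_on UNIV"
    using assms by (intro summable_on_cmult_right summable_on_add) (auto simp: lp_member_def)
  then show ?thesis unfolding lp_member_def
    by (rule summable_on_comparison_test) (use abs_diff_powr_le[OF assms(1)] in auto)
qed

lemma lp_norm_powr:
  assumes "0 < p"
  shows "lp_norm p g powr p = infsum (\<lambda>y. \<bar>g y\<bar> powr p) UNIV"
proof -
  have "0 \<le> infsum (\<lambda>y. \<bar>g y\<bar> powr p) UNIV" by (intro infsum_nonneg) auto
  then show ?thesis using assms by (simp add: lp_norm_def powr_powr)
qed

lemma lp_norm_diff_disjoint_supports: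
  assumes "0 < p" "lp_member p a" "lp_member p b" "lp_norm p a = 1" "lp_norm p b = 1"
    and disjoint: "\<And>z. a z = 0 \<or> b z = 0"
  shows "lp_norm p (a - b) powr p = 2"
proof -
  have split: "(\<lambda>y. \<bar>(a - b) y\<bar> powr p) = (\<lambda>y. \<bar>a y\<bar> powr p + \<bar>b y\<bar> powr p)"
  proof
    fix z show "\<bar>(a - b) z\<bar> powr p = \<bar>a z\<bar> powr p + \<bar>b z\<bar> powr p"
      using disjoint[of z] by auto
  qed
  have "infsum (\<lambda>y. \<bar>a y\<bar> powr p) UNIV = 1" "infsum (\<lambda>y. \<bar>b y\<bar> powr p) UNIV = 1"
    using assms(4,5) lp_norm_powr[OF assms(1), of a] lp_norm_powr[OF assms(1), of b] by simp_all
  then show ?thesis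
    using assms(2,3) unfolding lp_norm_powr[OF assms(1)] split
    by (subst infsum_add) (auto simp: lp_member_def)
qed

lemma dist_le_prop_size:
  assumes "prop_size \<xi> \<le> ereal S" "\<xi> x z \<noteq> 0"
  shows "dist x z \<le> S"
proof -
  have "ereal (dist x z) \<le> prop_size \<xi>"
    unfolding prop_size_def by (rule SUP_upper2[of "(x, z)"]) (use assms(2) in auto)
  then show ?thesis using assms(1) by (meson ereal_less_eq(3) order_trans)
qed

lemma lp_norm_diff_le_eps_map:
  assumes "eps_map p \<xi> \<le> ereal e"
  shows "lp_norm p (\<xi> x - \<xi> y) \<le> e * dist x y"
proof (cases "x = y")
  case False
  have "ereal (lp_norm p (\<xi> x - \<xi> y) / dist x y) \<le> eps_map p \<xi>"
    unfolding eps_map_def by (rule SUP_upper2[of "(x, y)"]) (use False in auto)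
  then have "lp_norm p (\<xi> x - \<xi> y) / dist x y \<le> e"
    using assms by (meson ereal_less_eq(3) order_trans)
  then show ?thesis using False by (simp add: divide_le_eq)
qed (simp add: lp_norm_def)

lemma lp_norm_diff_far_apart:
  assumes "0 < p" and unit: "\<And>x. lp_member p (\<xi> x) \<and> lp_norm p (\<xi> x) = 1"
    and "prop_size \<xi> \<le> ereal S" "2 * S < dist x y"
  shows "lp_norm p (\<xi> x - \<xi> y) powr p = 2"
proof (rule lp_norm_diff_disjoint_supports)
  fix z
  show "\<xi> x z = 0 \<or> \<xi> y z = 0"
  proof (rule ccontr)
    assume "\<not> ?thesis"
    then have "dist x z \<le> S" "dist y z \<le> S"
      using dist_le_prop_size[OF assms(3)] by auto
    then show False
      using assms(4) dist_triangle[of x y z] by (simp add: dist_commute)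
  qed
qed (use assms(1) unit in simp_all)

lemma profile_antimono:
  assumes "S \<le> S'"
  shows "profile TYPE('a::metric_space) p S' \<le> profile TYPE('a) p S"
  unfolding profile_def
  by (rule INF_superset_mono) (use assms in \<open>auto intro: order_trans\<close>)

lemma real_of_profile_antimono:
  assumes "S \<le> S'" "0 < profile TYPE('a::metric_space) p S'" "profile TYPE('a) p S < \<infinity>"
  shows "real_of_ereal (profile TYPE('a) p S') \<le> real_of_ereal (profile TYPE('a) p S)"
  using assms(2,3) profile_antimono[OF assms(1)]
  by (intro real_of_ereal_positive_mono) (simp_all add: less_imp_le)

lemma profile_near_optimal:
  assumes "0 < profile TYPE('a::metric_space) p S" "profile TYPE('a) p S < \<infinity>"
  shows "\<exists>\<xi> :: 'a \<Rightarrow> 'a \<Rightarrow> real. (\<forall>x. lp_member p (\<xi> x) \<and> lp_norm p (\<xi> x) = 1) \<and>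
           prop_size \<xi> \<le> ereal S \<and>
           (\<forall>x y. lp_norm p (\<xi> x - \<xi> y) \<le> 2 * real_of_ereal (profile TYPE('a) p S) * dist x y)"
proof -
  let ?\<epsilon> = "real_of_ereal (profile TYPE('a) p S)"
  have "profile TYPE('a) p S < ereal (2 * ?\<epsilon>)"
    using assms by (cases "profile TYPE('a) p S") auto
  then obtain \<xi> :: "'a \<Rightarrow> 'a \<Rightarrow> real" where
    unit: "\<forall>x. lp_member p (\<xi> x) \<and> lp_norm p (\<xi> x) = 1" and propagation: "prop_size \<xi> \<le> ereal S"
    and eps: "eps_map p \<xi> < ereal (2 * ?\<epsilon>)"
    unfolding profile_def by (subst (asm) INF_less_iff) blast
  have "lp_norm p (\<xi> x - \<xi> y) \<le> 2 * ?\<epsilon> * dist x y" for x y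
    using eps by (intro lp_norm_diff_le_eps_map) simp
  with unit propagation show ?thesis by blast
qed

section \<open>The Lebesgue--Stieltjes measure of f^p\<close>

lemma LS_fun_domain_nonempty: "{s. t < s \<and> c \<le> s} \<noteq> ({} :: real set)"
proof -
  have "max t c + 1 \<in> {s. t < s \<and> c \<le> s}" by auto
  then show ?thesis by blast
qed

lemma LS_fun_bdd_below: "bdd_below ((\<lambda>s. (f :: real \<Rightarrow> real) s powr p) ` {s. t < s \<and> c \<le> (s::real)})"
  by (rule bdd_belowI[of _ 0]) auto

lemma LS_fun_nonneg: "0 \<le> LS_fun f p c t"
  unfolding LS_fun_def by (rule cINF_greatest[OF LS_fun_domain_nonempty]) simp

lemma mono_LS_fun: "mono (LS_fun f p c)"
  unfolding LS_fun_def
  by (intro monoI cINF_superset_mono[OF LS_fun_domain_nonempty LS_fun_bdd_below]) auto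

lemma powr_le_LS_fun:
  assumes "0 < p" "mono_on {c..} f" "\<And>S. c \<le> S \<Longrightarrow> 0 \<le> f S" "c \<le> s"
  shows "f s powr p \<le> LS_fun f p c s"
  unfolding LS_fun_def
proof (rule cINF_greatest[OF LS_fun_domain_nonempty])
  fix t assume "t \<in> {t. s < t \<and> c \<le> t}"
  then have "f s \<le> f t" using assms(2,4) by (auto simp: mono_on_def)
  then show "f s powr p \<le> f t powr p" using assms by (intro powr_mono2) auto
qed

lemma LS_fun_continuous_at_right: "continuous (at_right a) (LS_fun f p c)"
proof -
  have "\<exists>\<delta>>0. LS_fun f p c (a + \<delta>) - LS_fun f p c a < e" if "e > 0" for e
  proof -
    have "(INF s \<in> {s. a < s \<and> c \<le> s}. f s powr p) < LS_fun f p c a + e"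
      using that by (simp add: LS_fun_def)
    then obtain s where s: "a < s" "c \<le> s" "f s powr p < LS_fun f p c a + e"
      by (subst (asm) cINF_less_iff[OF LS_fun_domain_nonempty LS_fun_bdd_below]) auto
    have "LS_fun f p c (a + (s - a) / 2) \<le> f s powr p"
      unfolding LS_fun_def by (rule cINF_lower[OF LS_fun_bdd_below]) (use s in \<open>auto simp: field_simps\<close>)
    then show ?thesis using s by (intro exI[of _ "(s - a) / 2"]) auto
  qed
  then show ?thesis
    using mono_LS_fun[of f p c] unfolding mono_def
    by (subst continuous_at_right_real_increasing) blast+
qed

section \<open>Step sums below a Lebesgue--Stieltjes integral\<close>

definition increments :: "(nat \<Rightarrow> real) \<Rightarrow> nat \<Rightarrow> real" where
  "increments u k = (case k of 0 \<Rightarrow> u 0 | Suc j \<Rightarrow> u (Suc j) - u j)"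

lemma increments_0 [simp]: "increments u 0 = u 0"
  and increments_Suc [simp]: "increments u (Suc k) = u (Suc k) - u k"
  by (simp_all add: increments_def)

lemma sum_increments: "(\<Sum>k\<le>n. increments u k) = u n"
  by (induction n) simp_all

lemma increments_nonneg: "mono u \<Longrightarrow> 0 \<le> u 0 \<Longrightarrow> 0 \<le> increments u k"
  by (cases k) (simp_all add: mono_iff_le_Suc)

lemma suminf_steps_le_nn_integral:
  fixes F g :: "real \<Rightarrow> real" and s a :: "nat \<Rightarrow> real"
  assumes F: "mono F" "\<And>t. continuous (at_right t) F" and s: "mono s" "c \<le> s 0"
    and a: "\<And>k. 0 \<le> a k" "\<And>k S. S \<in> {s k<..s (Suc k)} \<Longrightarrow> a k \<le> g S"
  shows "(\<Sum>k. ennreal ((F (s (Suc k)) - F (s k)) * a k))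
           \<le> (\<integral>\<^sup>+ S. indicator {c..} S * ennreal (g S) \<partial>interval_measure F)"
proof -
  define I where "I k = {s k<..s (Suc k)}" for k
  have "disjoint_family (\<lambda>k. {..s (Suc k)} - {..s k})"
    using s(1) by (intro disjoint_family_Suc) (simp add: mono_iff_le_Suc)
  moreover have "{..s (Suc k)} - {..s k} = I k" for k
    by (auto simp: I_def)
  ultimately have disjoint: "disjoint_family I"
    by simp
  have "(\<Sum>k. ennreal ((F (s (Suc k)) - F (s k)) * a k))
      = (\<Sum>k. \<integral>\<^sup>+ S. ennreal (a k) * indicator (I k) S \<partial>interval_measure F)"
  proof (rule suminf_cong)
    fix k
    have "emeasure (interval_measure F) (I k) = ennreal (F (s (Suc k)) - F (s k))"
      unfolding I_def using s(1) monoD[OF F(1)]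
      by (intro emeasure_interval_measure_Ioc F(2)) (auto simp: mono_iff_le_Suc)
    then show "ennreal ((F (s (Suc k)) - F (s k)) * a k)
        = \<integral>\<^sup>+ S. ennreal (a k) * indicator (I k) S \<partial>interval_measure F"
      using a(1)[of k] by (simp add: I_def nn_integral_cmult_indicator ennreal_mult' mult.commute)
  qed
  also have "\<dots> = \<integral>\<^sup>+ S. (\<Sum>k. ennreal (a k) * indicator (I k) S) \<partial>interval_measure F"
    by (rule nn_integral_suminf[symmetric]) (simp add: I_def)
  also have "\<dots> \<le> \<integral>\<^sup>+ S. indicator {c..} S * ennreal (g S) \<partial>interval_measure F"
  proof (rule nn_integral_mono)
    fix S
    show "(\<Sum>k. ennreal (a k) * indicator (I k) S) \<le> indicator {c..} S * ennreal (g S)"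
    proof (cases "\<exists>j. S \<in> I j")
      case True
      then obtain j where j: "S \<in> I j" by blast
      have "s 0 \<le> s j" using s(1) by (simp add: monoD)
      then have "c \<le> S" using j s(2) by (auto simp: I_def)
      then show ?thesis
        using suminf_cmult_indicator[OF disjoint j] a(2)[of S j] j by (simp add: I_def ennreal_leI)
    qed simp
  qed
  finally show ?thesis .
qed

lemma summable_increments_mult:
  fixes F g :: "real \<Rightarrow> real" and s a :: "nat \<Rightarrow> real"
  assumes F: "mono F" "\<And>t. continuous (at_right t) F" and s: "mono s" "c \<le> s 0"
    and a: "\<And>k. 0 \<le> a k" "\<And>k S. S \<in> {s k<..s (Suc k)} \<Longrightarrow> a (Suc k) \<le> g S"
    and integrable: "(\<integral>\<^sup>+ S. indicator {c..} S * ennreal (g S) \<partial>interval_measure F) < \<infinity>"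
  shows "summable (\<lambda>k. increments (F \<circ> s) k * a k)"
proof -
  have "(\<Sum>k. ennreal ((F (s (Suc k)) - F (s k)) * a (Suc k)))
      \<le> (\<integral>\<^sup>+ S. indicator {c..} S * ennreal (g S) \<partial>interval_measure F)"
    by (rule suminf_steps_le_nn_integral[OF F s]) (use a in auto)
  then have "(\<Sum>k. ennreal ((F (s (Suc k)) - F (s k)) * a (Suc k))) \<noteq> \<infinity>"
    using integrable by (simp add: less_top top.not_eq_extremum order.strict_trans1)
  with monoD[OF F(1) monoD[OF s(1)]] a(1)
  have "summable (\<lambda>k. (F (s (Suc k)) - F (s k)) * a (Suc k))"
    by (intro summable_suminf_not_top[rotated]) auto
  then show ?thesis
    by (subst summable_Suc_iff[symmetric]) simp
qed

section \<open>Discrete measures and the scale embedding\<close>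

definition discrete_measure :: "real set \<Rightarrow> (nat \<Rightarrow> real) \<Rightarrow> (nat \<Rightarrow> real) \<Rightarrow> real measure" where
  "discrete_measure A s w =
     distr (density (count_space UNIV) (\<lambda>k. ennreal (w k))) (restrict_space borel A) s"

lemma sets_discrete_measure [simp]: "sets (discrete_measure A s w) = sets (restrict_space borel A)"
  by (simp add: discrete_measure_def)

lemma space_discrete_measure [simp]: "space (discrete_measure A s w) = A"
  by (simp add: discrete_measure_def space_restrict_space)

lemma measurable_restrict_borel_const_off_countable:
  fixes A :: "'a::t1_space set"
  assumes "countable X" "X \<subseteq> A" "z \<in> space N" "\<And>t. h t \<in> space N" "\<And>t. t \<notin> X \<Longrightarrow> h t = z"
  shows "h \<in> measurable (restrict_space borel A) N"
proof (rule measurable_discrete_difference[where f="\<lambda>_. z" and X=X])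
  fix x assume "x \<in> X"
  then show "{x} \<in> sets (restrict_space borel A)"
    unfolding sets_restrict_space using assms(2) by (intro image_eqI[where x="{x}"]) (auto intro: borel_closed)
qed (use assms in auto)

lemma nn_integral_discrete_measure:
  assumes "range s \<subseteq> A" "\<And>t. t \<notin> range s \<Longrightarrow> H t = 0"
  shows "(\<integral>\<^sup>+ t. H t \<partial>discrete_measure A s w) = (\<Sum>k. ennreal (w k) * H (s k))"
proof -
  have "H \<in> borel_measurable (restrict_space borel A)"
    by (rule measurable_restrict_borel_const_off_countable[of "range s" _ 0]) (use assms in auto)
  moreover have "s \<in> measurable (density (count_space UNIV) (\<lambda>k. ennreal (w k))) (restrict_space borel A)"
    using assms(1)
    by (subst measurable_cong_sets[OF sets_density refl])
       (auto intro!: measurable_restrict_space2 simp: space_restrict_space)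
  ultimately have "(\<integral>\<^sup>+ t. H t \<partial>discrete_measure A s w)
      = (\<integral>\<^sup>+ k. H (s k) \<partial>density (count_space UNIV) (\<lambda>k. ennreal (w k)))"
    unfolding discrete_measure_def
    by (intro nn_integral_distr) (use assms(1) in \<open>auto simp: space_restrict_space cong: measurable_cong_sets\<close>)
  also have "\<dots> = (\<integral>\<^sup>+ k. ennreal (w k) * H (s k) \<partial>count_space UNIV)"
    by (subst nn_integral_density) auto
  finally show ?thesis
    by (simp add: nn_integral_count_space_nat)
qed

text \<open>Truncating to the first n atoms gives simple approximations that are eventually exact.\<close>
lemma lp_strongly_measurable_discrete_measure:
  assumes "range s \<subseteq> A" "\<And>t. lp_member p (g t)" "\<And>t. t \<notin> range s \<Longrightarrow> g t = (\<lambda>_. 0)"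
  shows "lp_strongly_measurable (discrete_measure A s w) p g"
proof -
  define g\<^sub>n where "g\<^sub>n n t = (if t \<in> s ` {..n} then g t else (\<lambda>_. 0))" for n t
  have "lp_simple (discrete_measure A s w) p (g\<^sub>n n)" for n
    unfolding lp_simple_def
  proof (intro conjI ballI)
    have "g\<^sub>n n ` A \<subseteq> insert (\<lambda>_. 0) ((g \<circ> s) ` {..n})"
      by (auto simp: g\<^sub>n_def)
    then show "finite (g\<^sub>n n ` space (discrete_measure A s w))"
      by (auto intro: finite_subset)
    have meas: "g\<^sub>n n \<in> measurable (restrict_space borel A) (count_space UNIV)"
      using assms(1)
      by (intro measurable_restrict_borel_const_off_countable[of "s ` {..n}" _ "\<lambda>_. 0"])
         (auto simp: g\<^sub>n_def)
    show "g\<^sub>n n -` {v} \<inter> space (discrete_measure A s w) \<in> sets (discrete_measure A s w)" for v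
      using measurable_sets[OF meas, of "{v}"] by (simp add: space_restrict_space)
  next
    show "lp_member p (g\<^sub>n n t)" for t
      using assms(2) by (simp add: g\<^sub>n_def)
  qed
  moreover have "(\<lambda>n. lp_norm p (g\<^sub>n n t - g t)) \<longlonglongrightarrow> 0" for t
  proof -
    have "eventually (\<lambda>n. g\<^sub>n n t = g t) sequentially"
    proof (cases "t \<in> range s")
      case True
      then obtain k where k: "t = s k" by auto
      show ?thesis
        using eventually_ge_at_top[of k] by (rule eventually_mono) (auto simp: k g\<^sub>n_def)
    qed (use assms(3) in \<open>simp add: g\<^sub>n_def\<close>)
    then have "eventually (\<lambda>n. lp_norm p (g\<^sub>n n t - g t) = 0) sequentially"
      by eventually_elim (simp add: lp_norm_def)
    then show ?thesis by (rule tendsto_eventually)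
  qed
  ultimately show ?thesis
    unfolding lp_strongly_measurable_def using assms(2) by blast
qed

text \<open>Subtracting the base point x0 keeps each \<theta> x p-integrable even when \<mu> has infinite mass.\<close>
definition scale_embedding ::
    "(nat \<Rightarrow> real) \<Rightarrow> (nat \<Rightarrow> 'a \<Rightarrow> 'b \<Rightarrow> real) \<Rightarrow> 'a \<Rightarrow> 'a \<Rightarrow> real \<Rightarrow> 'b \<Rightarrow> real" where
  "scale_embedding s \<xi> x\<^sub>0 x t =
     (if t \<in> range s then \<xi> (inv s t) x - \<xi> (inv s t) x\<^sub>0 else (\<lambda>_. 0))"

lemma scale_embedding_at_scale: "inj s \<Longrightarrow> scale_embedding s \<xi> x\<^sub>0 x (s k) = \<xi> k x - \<xi> k x\<^sub>0"
  by (simp add: scale_embedding_def)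

lemma scale_embedding_diff_at_scale:
  "inj s \<Longrightarrow> scale_embedding s \<xi> x\<^sub>0 x (s k) - scale_embedding s \<xi> x\<^sub>0 y (s k) = \<xi> k x - \<xi> k y"
  by (simp add: scale_embedding_at_scale fun_diff_def)

lemma scale_embedding_off_scales: "t \<notin> range s \<Longrightarrow> scale_embedding s \<xi> x\<^sub>0 x t = (\<lambda>_. 0)"
  by (simp add: scale_embedding_def)

lemma scale_embedding_diff_off_scales:
  "t \<notin> range s \<Longrightarrow> scale_embedding s \<xi> x\<^sub>0 x t - scale_embedding s \<xi> x\<^sub>0 y t = (\<lambda>_. 0)"
  by (simp add: scale_embedding_def fun_diff_def)

lemma suminf_ennreal_mult:
  assumes "\<And>k. 0 \<le> a k" "\<And>k. 0 \<le> b k" "summable (\<lambda>k. a k * b k)"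
  shows "(\<Sum>k. ennreal (a k) * ennreal (b k)) = ennreal (\<Sum>k. a k * b k)"
proof -
  have "(\<Sum>k. ennreal (a k) * ennreal (b k)) = (\<Sum>k. ennreal (a k * b k))"
    using assms(1,2) by (simp add: ennreal_mult)
  also have "\<dots> = ennreal (\<Sum>k. a k * b k)"
    using assms by (intro suminf_ennreal2) auto
  finally show ?thesis .
qed

lemma Lp_lp_scale_embedding:
  assumes "0 < p" "inj s" "range s \<subseteq> A" "\<And>k. 0 \<le> w k" "\<And>k x. lp_member p (\<xi> k x)"
    and "summable (\<lambda>k. w k * lp_norm p (\<xi> k x - \<xi> k x\<^sub>0) powr p)"
  shows "Lp_lp (discrete_measure A s w) p (scale_embedding s \<xi> x\<^sub>0 x)"
proof -
  have "lp_member p (scale_embedding s \<xi> x\<^sub>0 x t)" for t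
    using lp_member_diff[OF assms(1,5,5)] by (simp add: scale_embedding_def)
  then have "lp_strongly_measurable (discrete_measure A s w) p (scale_embedding s \<xi> x\<^sub>0 x)"
    using assms(3) by (intro lp_strongly_measurable_discrete_measure) (auto simp: scale_embedding_off_scales)
  moreover have "(\<integral>\<^sup>+ t. ennreal (lp_norm p (scale_embedding s \<xi> x\<^sub>0 x t) powr p) \<partial>discrete_measure A s w)
      = (\<Sum>k. ennreal (w k) * ennreal (lp_norm p (\<xi> k x - \<xi> k x\<^sub>0) powr p))"
    using assms(3)
    by (subst nn_integral_discrete_measure)
       (simp_all add: scale_embedding_off_scales scale_embedding_at_scale[OF assms(2)])
  moreover have "\<dots> = ennreal (\<Sum>k. w k * lp_norm p (\<xi> k x - \<xi> k x\<^sub>0) powr p)"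
    using assms(4,6) by (intro suminf_ennreal_mult) auto
  ultimately show ?thesis
    unfolding Lp_lp_def by simp
qed

lemma Lp_lp_norm_scale_embedding_diff:
  assumes "inj s" "range s \<subseteq> A" "\<And>k. 0 \<le> w k"
    and "summable (\<lambda>k. w k * lp_norm p (\<xi> k x - \<xi> k y) powr p)"
  shows "Lp_lp_norm (discrete_measure A s w) p
           (\<lambda>t. scale_embedding s \<xi> x\<^sub>0 x t - scale_embedding s \<xi> x\<^sub>0 y t)
         = (\<Sum>k. w k * lp_norm p (\<xi> k x - \<xi> k y) powr p) powr (1 / p)"
proof -
  have "(\<integral>\<^sup>+ t. ennreal (lp_norm p (scale_embedding s \<xi> x\<^sub>0 x t - scale_embedding s \<xi> x\<^sub>0 y t) powr p)
          \<partial>discrete_measure A s w)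
      = (\<Sum>k. ennreal (w k) * ennreal (lp_norm p (\<xi> k x - \<xi> k y) powr p))" (is "?I = _")
    using assms(2)
    by (subst nn_integral_discrete_measure)
       (simp_all add: scale_embedding_diff_off_scales scale_embedding_diff_at_scale[OF assms(1)])
  also have "\<dots> = ennreal (\<Sum>k. w k * lp_norm p (\<xi> k x - \<xi> k y) powr p)"
    using assms(3,4) by (intro suminf_ennreal_mult) auto
  finally have "?I = ennreal (\<Sum>k. w k * lp_norm p (\<xi> k x - \<xi> k y) powr p)" .
  moreover have "0 \<le> (\<Sum>k. w k * lp_norm p (\<xi> k x - \<xi> k y) powr p)"
    using assms(3,4) by (intro suminf_nonneg) auto
  ultimately show ?thesis
    unfolding Lp_lp_norm_def by simp
qed

section \<open>The two-sided estimate\<close>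

lemma weighted_lp_diff_bound:
  fixes \<xi> :: "nat \<Rightarrow> 'a::metric_space \<Rightarrow> 'b \<Rightarrow> real"
  assumes p: "0 < p" and w: "\<And>k. 0 \<le> w k" and e: "\<And>k. 0 \<le> e k"
    and lip: "\<And>k. lp_norm p (\<xi> k x - \<xi> k y) \<le> e k * dist x y"
    and summable: "summable (\<lambda>k. w k * e k powr p)"
  shows "summable (\<lambda>k. w k * lp_norm p (\<xi> k x - \<xi> k y) powr p)"
    and "(\<Sum>k. w k * lp_norm p (\<xi> k x - \<xi> k y) powr p) powr (1 / p)
           \<le> (\<Sum>k. w k * e k powr p) powr (1 / p) * dist x y"
proof -
  have term_le: "w k * lp_norm p (\<xi> k x - \<xi> k y) powr p \<le> w k * e k powr p * dist x y powr p" for k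
  proof -
    have "lp_norm p (\<xi> k x - \<xi> k y) powr p \<le> (e k * dist x y) powr p"
      using lip[of k] p by (intro powr_mono2) (auto simp: lp_norm_nonneg)
    then show ?thesis
      using w[of k] e[of k] by (simp add: powr_mult mult.assoc mult_left_mono)
  qed
  have summable_bound: "summable (\<lambda>k. w k * e k powr p * dist x y powr p)"
    using summable by (rule summable_mult2)
  show summable_diff: "summable (\<lambda>k. w k * lp_norm p (\<xi> k x - \<xi> k y) powr p)"
    using w term_le by (intro summable_comparison_test'[OF summable_bound]) auto
  have "(\<Sum>k. w k * lp_norm p (\<xi> k x - \<xi> k y) powr p) \<le> (\<Sum>k. w k * e k powr p) * dist x y powr p"
    using suminf_le[OF term_le summable_diff summable_bound] suminf_mult2[OF summable] by simp
  then have "(\<Sum>k. w k * lp_norm p (\<xi> k x - \<xi> k y) powr p) powr (1 / p)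
      \<le> ((\<Sum>k. w k * e k powr p) * dist x y powr p) powr (1 / p)"
    using p w by (intro powr_mono2 suminf_nonneg[OF summable_diff]) auto
  also have "\<dots> = (\<Sum>k. w k * e k powr p) powr (1 / p) * dist x y"
    using p w by (simp add: powr_mult powr_powr suminf_nonneg[OF summable])
  finally show "(\<Sum>k. w k * lp_norm p (\<xi> k x - \<xi> k y) powr p) powr (1 / p)
      \<le> (\<Sum>k. w k * e k powr p) powr (1 / p) * dist x y" .
qed

definition scale_compression :: "real \<Rightarrow> (nat \<Rightarrow> real) \<Rightarrow> (nat \<Rightarrow> real) \<Rightarrow> real \<Rightarrow> real" where
  "scale_compression p s w t = (\<Sum>k | 2 * s k < t. w k) powr (1 / p)"

lemma mono_scale_compression:
  assumes "0 < p" "\<And>t. finite {k. 2 * s k < t}" "\<And>k. 0 \<le> w k"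
  shows "mono (scale_compression p s w)"
proof (rule monoI)
  fix r t :: real
  assume "r \<le> t"
  then have "(\<Sum>k | 2 * s k < r. w k) \<le> (\<Sum>k | 2 * s k < t. w k)"
    using assms(2,3) by (intro sum_mono2) auto
  then show "scale_compression p s w r \<le> scale_compression p s w t"
    unfolding scale_compression_def using assms by (intro powr_mono2 sum_nonneg) auto
qed

lemma scale_compression_le:
  fixes \<xi> :: "nat \<Rightarrow> 'a::metric_space \<Rightarrow> 'a \<Rightarrow> real"
  assumes p: "0 < p" and finite_scales: "\<And>t. finite {k. 2 * s k < t}" and w: "\<And>k. 0 \<le> w k"
    and unit: "\<And>k x. lp_member p (\<xi> k x) \<and> lp_norm p (\<xi> k x) = 1"
    and propagation: "\<And>k. prop_size (\<xi> k) \<le> ereal (s k)"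
    and summable: "summable (\<lambda>k. w k * lp_norm p (\<xi> k x - \<xi> k y) powr p)"
  shows "scale_compression p s w (dist x y)
           \<le> (\<Sum>k. w k * lp_norm p (\<xi> k x - \<xi> k y) powr p) powr (1 / p)"
proof -
  have "(\<Sum>k | 2 * s k < dist x y. w k)
      \<le> (\<Sum>k | 2 * s k < dist x y. w k * lp_norm p (\<xi> k x - \<xi> k y) powr p)"
    using w by (intro sum_mono) (simp add: lp_norm_diff_far_apart[OF p unit propagation])
  also have "\<dots> \<le> (\<Sum>k. w k * lp_norm p (\<xi> k x - \<xi> k y) powr p)"
    using summable finite_scales w by (intro sum_le_suminf) auto
  finally show ?thesis
    unfolding scale_compression_def using p w by (intro powr_mono2 sum_nonneg) auto
qed

definition step_scale :: "real \<Rightarrow> nat \<Rightarrow> real" where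
  "step_scale c k = c * real (Suc k)"

lemma step_scale_ge: "0 \<le> c \<Longrightarrow> c \<le> step_scale c k"
  by (simp add: step_scale_def distrib_left)

lemma mono_step_scale: "0 \<le> c \<Longrightarrow> mono (step_scale c)"
  by (auto simp: mono_def step_scale_def intro: mult_left_mono)

lemma range_step_scale: "0 \<le> c \<Longrightarrow> range (step_scale c) \<subseteq> {c..}"
  using step_scale_ge by fastforce

lemma inj_step_scale: "0 < c \<Longrightarrow> inj (step_scale c)"
  by (auto simp: inj_def step_scale_def)

lemma finite_step_scales_below:
  assumes "0 < c"
  shows "finite {k. 2 * step_scale c k < t}"
proof (rule finite_subset)
  show "{k. 2 * step_scale c k < t} \<subseteq> {..nat \<lceil>t / c\<rceil>}"
  proof
    fix k assume "k \<in> {k. 2 * step_scale c k < t}"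
    then have "2 * c + 2 * (c * real k) < t"
      by (simp add: step_scale_def distrib_left)
    moreover have "0 \<le> c * real k"
      using assms by simp
    ultimately have "c * real k < t"
      using assms by linarith
    then have "real k \<le> t / c"
      using assms by (simp add: field_simps)
    then show "k \<in> {..nat \<lceil>t / c\<rceil>}"
      by (simp add: le_nat_iff ceiling_le_iff[symmetric] le_ceiling_iff)
  qed
qed simp

lemma step_scale_between:
  assumes "0 < c" "4 * c \<le> t"
  shows "\<exists>k. t / 4 \<le> step_scale c k \<and> 2 * step_scale c k < t"
proof -
  define n where "n = nat \<lceil>t / (4 * c)\<rceil>"
  have "1 \<le> t / (4 * c)"
    using assms by (simp add: field_simps)
  then have n: "t / (4 * c) \<le> real n" "real n < t / (4 * c) + 1" "1 \<le> n"
    unfolding n_def by linarith+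
  then have "t / 4 \<le> c * real n" "c * real n < t / 4 + c"
    using assms(1) by (simp_all add: field_simps)
  moreover have "step_scale c (n - 1) = c * real n"
    using n(3) by (simp add: step_scale_def)
  ultimately show ?thesis
    using assms by (intro exI[of _ "n - 1"]) simp
qed

lemma succeq_scale_compression:
  fixes f F :: "real \<Rightarrow> real"
  assumes p: "0 < p" and c: "0 < c" and f: "mono_on {c..} f" "\<And>S. c \<le> S \<Longrightarrow> 0 \<le> f S"
    and F: "mono F" "\<And>S. c \<le> S \<Longrightarrow> f S powr p \<le> F S"
  shows "succeq_fun (scale_compression p (step_scale c) (increments (F \<circ> step_scale c))) f"
proof -
  let ?s = "step_scale c" and ?w = "increments (F \<circ> step_scale c)"
  have "mono (F \<circ> ?s)"
    using F(1) mono_step_scale c by (simp add: mono_def)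
  moreover have "0 \<le> F (?s 0)"
    using F(2) step_scale_ge c by (meson less_imp_le order_trans powr_ge_zero)
  ultimately have w: "0 \<le> ?w k" for k
    by (intro increments_nonneg) simp_all
  have "1 * f (1 / 4 * t) \<le> scale_compression p ?s ?w t" if t: "4 * c \<le> t" for t
  proof -
    obtain k where k: "t / 4 \<le> ?s k" "2 * ?s k < t"
      using step_scale_between[OF c t] by blast
    have "f (t / 4) powr p \<le> f (?s k) powr p"
      using f t k c p by (intro powr_mono2) (auto simp: mono_on_def)
    also have "\<dots> \<le> F (?s k)"
      using F(2) step_scale_ge c by simp
    also have "\<dots> = (\<Sum>j\<le>k. ?w j)"
      by (simp add: sum_increments)
    also have "\<dots> \<le> (\<Sum>j | 2 * ?s j < t. ?w j)"
    proof (rule sum_mono2[OF finite_step_scales_below[OF c]])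
      have "mono ?s"
        using c by (simp add: mono_step_scale)
      show "{..k} \<subseteq> {j. 2 * ?s j < t}"
      proof (intro subsetI CollectI)
        fix j assume "j \<in> {..k}"
        then have "?s j \<le> ?s k"
          using \<open>mono ?s\<close> by (simp add: monoD)
        then show "2 * ?s j < t"
          using k(2) by simp
      qed
    qed (use w in simp)
    finally have "(f (t / 4) powr p) powr (1 / p) \<le> scale_compression p ?s ?w t"
      unfolding scale_compression_def using p by (intro powr_mono2) auto
    then show ?thesis
      using p f(2)[of "t / 4"] t by (simp add: powr_powr)
  qed
  then have "eventually (\<lambda>t. 1 * f (1 / 4 * t) \<le> scale_compression p ?s ?w t) at_top"
    unfolding eventually_at_top_linorder by blast
  then show ?thesis
    unfolding succeq_fun_def
  proof (intro exI conjI)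
    show "eventually (\<lambda>t. 1 * f (1 / 4 * t) \<le> scale_compression p ?s ?w t) at_top" by fact
  qed simp_all
qed

lemma profile_near_optimal_family:
  assumes "\<And>k. 0 < profile TYPE('a::metric_space) p (s k) \<and> profile TYPE('a) p (s k) < \<infinity>"
  shows "\<exists>\<xi> :: nat \<Rightarrow> 'a \<Rightarrow> 'a \<Rightarrow> real.
           (\<forall>k x. lp_member p (\<xi> k x) \<and> lp_norm p (\<xi> k x) = 1) \<and>
           (\<forall>k. prop_size (\<xi> k) \<le> ereal (s k)) \<and>
           (\<forall>k x y. lp_norm p (\<xi> k x - \<xi> k y)
                      \<le> 2 * real_of_ereal (profile TYPE('a) p (s k)) * dist x y)"
proof -
  have "\<forall>k. \<exists>\<xi> :: 'a \<Rightarrow> 'a \<Rightarrow> real. (\<forall>x. lp_member p (\<xi> x) \<and> lp_norm p (\<xi> x) = 1) \<and>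
           prop_size \<xi> \<le> ereal (s k) \<and>
           (\<forall>x y. lp_norm p (\<xi> x - \<xi> y) \<le> 2 * real_of_ereal (profile TYPE('a) p (s k)) * dist x y)"
    using assms by (blast intro: profile_near_optimal)
  from choice[OF this] show ?thesis
    by blast
qed

text \<open>The profile is non-increasing, so on (S_k, S_(k+1)] it dominates its value at S_(k+1).\<close>
lemma summable_increments_profile:
  fixes f :: "real \<Rightarrow> real"
  assumes p: "0 < p" and c: "0 < c"
    and profile: "\<And>S. c \<le> S \<Longrightarrow> 0 < profile TYPE('a::metric_space) p S \<and> profile TYPE('a) p S < \<infinity>"
    and integrable: "(\<integral>\<^sup>+ S. indicator {c..} S * ennreal (real_of_ereal (profile TYPE('a) p S) powr p)
                 \<partial>interval_measure (LS_fun f p c)) < \<infinity>"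
  shows "summable (\<lambda>k. increments (LS_fun f p c \<circ> step_scale c) k
                         * real_of_ereal (profile TYPE('a) p (step_scale c k)) powr p)"
proof (rule summable_increments_mult[OF mono_LS_fun LS_fun_continuous_at_right
      mono_step_scale[OF less_imp_le[OF c]] step_scale_ge[OF less_imp_le[OF c]] _ _ integrable])
  show "0 \<le> real_of_ereal (profile TYPE('a) p (step_scale c k)) powr p" for k
    by simp
  fix k S
  assume S: "S \<in> {step_scale c k<..step_scale c (Suc k)}"
  then have "c \<le> S"
    using step_scale_ge[of c k] c by auto
  then have "real_of_ereal (profile TYPE('a) p (step_scale c (Suc k)))
      \<le> real_of_ereal (profile TYPE('a) p S)"
    using S profile step_scale_ge[of c "Suc k"] c by (intro real_of_profile_antimono) auto
  moreover have "0 \<le> real_of_ereal (profile TYPE('a) p (step_scale c (Suc k)))"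
    using profile step_scale_ge[of c "Suc k"] c by (simp add: real_of_ereal_pos less_imp_le)
  ultimately show "real_of_ereal (profile TYPE('a) p (step_scale c (Suc k))) powr p
      \<le> real_of_ereal (profile TYPE('a) p S) powr p"
    using p by (intro powr_mono2) auto
qed

lemma scale_embedding_two_sided:
  fixes \<xi> :: "nat \<Rightarrow> 'a::metric_space \<Rightarrow> 'a \<Rightarrow> real" and x\<^sub>0 :: 'a
  assumes p: "0 < p" and s: "inj s" "range s \<subseteq> A" "\<And>t. finite {k. 2 * s k < t}"
    and w: "\<And>k. 0 \<le> w k" and e: "\<And>k. 0 \<le> e k"
    and unit: "\<And>k x. lp_member p (\<xi> k x) \<and> lp_norm p (\<xi> k x) = 1"
    and propagation: "\<And>k. prop_size (\<xi> k) \<le> ereal (s k)"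
    and lip: "\<And>k x y. lp_norm p (\<xi> k x - \<xi> k y) \<le> e k * dist x y"
    and summable: "summable (\<lambda>k. w k * e k powr p)"
  defines "\<mu> \<equiv> discrete_measure A s w" and "\<theta> \<equiv> scale_embedding s \<xi> x\<^sub>0"
  shows "Lp_lp \<mu> p (\<theta> x)"
    and "Lp_lp_norm \<mu> p (\<lambda>t. \<theta> x t - \<theta> y t) \<le> (\<Sum>k. w k * e k powr p) powr (1 / p) * dist x y"
    and "scale_compression p s w (dist x y) \<le> Lp_lp_norm \<mu> p (\<lambda>t. \<theta> x t - \<theta> y t)"
proof -
  note bound = weighted_lp_diff_bound[OF p w e lip summable]
  show "Lp_lp \<mu> p (\<theta> x)"
    unfolding \<mu>_def \<theta>_def by (rule Lp_lp_scale_embedding[OF p s(1,2) w conjunct1[OF unit] bound(1)])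
  have norm: "Lp_lp_norm \<mu> p (\<lambda>t. \<theta> x t - \<theta> y t)
      = (\<Sum>k. w k * lp_norm p (\<xi> k x - \<xi> k y) powr p) powr (1 / p)"
    unfolding \<mu>_def \<theta>_def by (rule Lp_lp_norm_scale_embedding_diff[OF s(1,2) w bound(1)])
  show "Lp_lp_norm \<mu> p (\<lambda>t. \<theta> x t - \<theta> y t) \<le> (\<Sum>k. w k * e k powr p) powr (1 / p) * dist x y"
    unfolding norm by (rule bound(2))
  show "scale_compression p s w (dist x y) \<le> Lp_lp_norm \<mu> p (\<lambda>t. \<theta> x t - \<theta> y t)"
    unfolding norm by (rule scale_compression_le[OF p s(3) w unit propagation bound(1)])
qed

theorem corollary2p4p4:
  fixes p c :: real and f :: "real \<Rightarrow> real"
  assumes hp: "1 \<le> p" and hc: "0 < c"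
    and hprof: "\<And>S. c \<le> S \<Longrightarrow> 0 < profile TYPE('a::metric_space) p S \<and> profile TYPE('a) p S < \<infinity>"
    and hfmono: "mono_on {c..} f"
    and hfnn: "\<And>S. c \<le> S \<Longrightarrow> 0 \<le> f S"
    and hint: "(\<integral>\<^sup>+ S. indicator {c..} S * ennreal (real_of_ereal (profile TYPE('a) p S) powr p)
                 \<partial>(interval_measure (LS_fun f p c))) < \<infinity>"
  shows "\<exists>(\<mu> :: real measure) (\<theta> :: 'a \<Rightarrow> real \<Rightarrow> 'a \<Rightarrow> real) (\<rho> :: real \<Rightarrow> real).
           sets \<mu> = sets (restrict_space borel {c..}) \<and>
           (\<forall>x. Lp_lp \<mu> p (\<theta> x)) \<and>
           (\<exists>L. \<forall>x y. Lp_lp_norm \<mu> p (\<lambda>t. \<theta> x t - \<theta> y t) \<le> L * dist x y) \<and>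
           mono_on {0..} \<rho> \<and> succeq_fun \<rho> f \<and>
           (\<forall>x y. \<rho> (dist x y) \<le> Lp_lp_norm \<mu> p (\<lambda>t. \<theta> x t - \<theta> y t))"
proof -
  have p: "0 < p" using hp by simp
  let ?s = "step_scale c"
  define \<epsilon> where "\<epsilon> k = real_of_ereal (profile TYPE('a) p (?s k))" for k
  have profile_scales: "0 < profile TYPE('a) p (?s k) \<and> profile TYPE('a) p (?s k) < \<infinity>" for k
    by (rule hprof[OF step_scale_ge[OF less_imp_le[OF hc]]])
  then have \<epsilon>_nonneg: "0 \<le> 2 * \<epsilon> k" for k
    unfolding \<epsilon>_def by (simp add: real_of_ereal_pos order.strict_implies_order)
  have "\<exists>\<xi> :: nat \<Rightarrow> 'a \<Rightarrow> 'a \<Rightarrow> real.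
           (\<forall>k x. lp_member p (\<xi> k x) \<and> lp_norm p (\<xi> k x) = 1) \<and>
           (\<forall>k. prop_size (\<xi> k) \<le> ereal (?s k)) \<and>
           (\<forall>k x y. lp_norm p (\<xi> k x - \<xi> k y) \<le> 2 * \<epsilon> k * dist x y)"
    unfolding \<epsilon>_def by (rule profile_near_optimal_family) (rule profile_scales)
  then obtain \<xi> :: "nat \<Rightarrow> 'a \<Rightarrow> 'a \<Rightarrow> real"
    where unit: "\<And>k x. lp_member p (\<xi> k x) \<and> lp_norm p (\<xi> k x) = 1"
      and propagation: "\<And>k. prop_size (\<xi> k) \<le> ereal (?s k)"
      and lip: "\<And>k x y. lp_norm p (\<xi> k x - \<xi> k y) \<le> 2 * \<epsilon> k * dist x y"
    by blast
  define w where "w = increments (LS_fun f p c \<circ> ?s)"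
  have w: "0 \<le> w k" for k
    unfolding w_def using mono_LS_fun mono_step_scale hc
    by (intro increments_nonneg) (auto simp: mono_def LS_fun_nonneg)
  have "summable (\<lambda>k. 2 powr p * (w k * \<epsilon> k powr p))"
    using summable_increments_profile[OF p hc hprof hint] unfolding w_def \<epsilon>_def
    by (rule summable_mult)
  then have "summable (\<lambda>k. w k * (2 * \<epsilon> k) powr p)"
    using \<epsilon>_nonneg by (simp add: powr_mult mult.left_commute)
  note embedding = scale_embedding_two_sided[OF p inj_step_scale[OF hc]
      range_step_scale[OF less_imp_le[OF hc]] finite_step_scales_below[OF hc] w \<epsilon>_nonneg unit propagation lip this]
  have "mono_on {0..} (scale_compression p ?s w)"
    by (rule mono_imp_mono_on[OF mono_scale_compression[OF p finite_step_scales_below[OF hc] w]])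
  moreover have "succeq_fun (scale_compression p ?s w) f"
    unfolding w_def
    by (rule succeq_scale_compression[OF p hc hfmono hfnn mono_LS_fun powr_le_LS_fun[OF p hfmono hfnn]])
  ultimately show ?thesis
    by (intro exI[of _ "discrete_measure {c..} ?s w"] exI[of _ "scale_embedding ?s \<xi> undefined"]
        exI[of _ "scale_compression p ?s w"] exI[of _ "(\<Sum>k. w k * (2 * \<epsilon> k) powr p) powr (1 / p)"]
        conjI allI) (simp_all add: embedding)
qed

end
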